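(* Let $G$ be a finite simple graph on vertex set $\mathcal C$ with a disjoint decomposition $\mathcal C=\mathcal C_I\cup\mathcal C_M\cup\mathcal C_O$, where $|\mathcal C_I|=|\mathcal C_O|=n$, the input qudits are labelled $\mathcal C_I=\{I_1,\dots,I_n\}$ and the output qudits $\mathcal C_O=\{O_1,\dots,O_n\}$. Let $|\phi\rangle_{\mathcal C}$ be the cluster state of $G$ and $S$ its generator. For each $a\in\mathcal C_M$ fix a unitary $u_a$ on $\mathbb C^d$ and an outcome $s_a\in\mathbb Z_d$, and let $P=\bigotimes_{a\in\mathcal C_M}u_a|s_a\rangle\langle s_a|u_a^{\dagger}$. Let $U$ be a unitary on $(\mathbb C^d)^{\otimes n}$, acting on $\mathcal C_O$ with the $i$-th tensor factor identified with $O_i$; for an operator $A$ on $(\mathbb C^d)^{\otimes n}$ write $(A)_{\mathcal C_O}$ for this action. Suppose that $|\psi\rangle=P|\phi\rangle_{\mathcal C}$ is nonzero and satisfies, for some $\lambda_{x,i},\lambda_{z,i}\in\mathbb Z_d$ and all $1\le i\le n$, $$X_{I_i}\,(UX_iU^{\dagger})_{\mathcal C_O}|\psi\rangle=q^{-\lambda_{x,i}}|\psi\rangle,\qquad Z_{I_i}^{\dagger}\,(UZ_iU^{\dagger})_{\mathcal C_O}|\psi\rangle=q^{-\lambda_{z,i}}|\psi\rangle,$$ where $X_i,Z_i$ act on the $i$-th factor of $(\mathbb C^d)^{\otimes n}$. Then for all outcomes $s_{I_1},\dots,s_{I_n}\in\mathbb Z_d$ there is a nonzero constant $c\in\mathbb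 C$ such that for every input state $|\psi(\mathrm{in})\rangle$ on $\mathcal C_I$, $$\Big(\bigotimes_{i=1}^n|x(s_{I_i})\rangle\langle x(s_{I_i})|_{I_i}\Big)\,P\;S\big(|\psi(\mathrm{in})\rangle_{\mathcal C_I}\otimes|+\rangle_{\mathcal C_M\cup\mathcal C_O}\big)=c\,\Big(\bigotimes_{i}|x(s_{I_i})\rangle_{I_i}\Big)\otimes\Big(\bigotimes_{a\in\mathcal C_M}u_a|s_a\rangle_a\Big)\otimes|\psi(\mathrm{out})\rangle_{\mathcal C_O},$$ where $|\psi(\mathrm{out})\rangle=U\,U_\Sigma|\psi(\mathrm{in})\rangle$ (with $|\psi(\mathrm{in})\rangle$ transported to $\mathcal C_O$ via $I_i\mapsto O_i$) and $$U_\Sigma=\bigotimes_{i=1}^{n}Z_i^{-\lambda_{x,i}-s_{I_i}}X_i^{\lambda_{z,i}}.$$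
   Context: Fix an integer $d\ge 2$ and $q=e^{2\pi i/d}$. A qudit has Hilbert space $\mathbb C^d$ with orthonormal basis $\{|k\rangle:k\in\mathbb Z_d\}$; $Z|k\rangle=q^k|k\rangle$, $X|k\rangle=|k-1\bmod d\rangle$ (so $XZ=qZX$); $|x(j)\rangle=d^{-1/2}\sum_k q^{jk}|k\rangle$, the eigenvector of $X$ with eigenvalue $q^j$. A subscript $a$ on an operator/state means it acts on/belongs to qudit $a$. For qudits $a,b$, $S_{ab}|j\rangle_a|k\rangle_b=q^{jk}|j\rangle_a|k\rangle_b$. For a graph $G$ on vertex set $\mathcal C$, the cluster state generator is $S=\prod_{\{a,b\}\in E(G)}S_{ab}$, $|+\rangle_{A}=\bigotimes_{a\in A}|x(0)\rangle_a$, and the cluster state is $|\phi\rangle_{\mathcal C}=S|+\rangle_{\mathcal C}$; it satisfies $X_a^\dagger\bigotimes_{b\text{ neighbour of }a}Z_b|\phi\rangle_{\mathcal C}=|\phi\rangle_{\mathcal C}$ for all $a$. Measuring qudit $a$ "in pattern $u_aZu_a^\dagger$" means measuring in the basis $\{u_a|s\rangle\}_{s\in\mathbb Z_d}$, outcome $s$ corresponding to $u_a|s\rangle$; input qudits are measured in the eigenbasis of $X$, outcome $s$ corresponding to $|x(s)\rangle$. *)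

theory Defs
  imports Complex_Main
begin

text \<open>A (pure, unnormalised) state of the qudits in a set A of
labels is a coefficient function on computational-basis configurations
k :: 'a \<Rightarrow> nat with k a < d on A and k a = 0 off A.
Single-qudit operators are d x d matrices M :: nat \<Rightarrow> nat \<Rightarrow> complex,
M j k = <j|M|k>.  Operators on n qudits are matrices indexed by configurations
of {..<n}.\<close>

definition cfgs :: "'a set \<Rightarrow> nat \<Rightarrow> ('a \<Rightarrow> nat) set" where
  "cfgs A d = {k. (\<forall>a\<in>A. k a < d) \<and> (\<forall>a. a \<notin> A \<longrightarrow> k a = 0)}"

text \<open>qpow d m = q^m with q = exp(2 pi i / d)\<close>
definition qpow :: "nat \<Rightarrow> int \<Rightarrow> complex" where
  "qpow d m = cis (2 * pi * of_int m / of_nat d)"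

definition Zpow :: "nat \<Rightarrow> int \<Rightarrow> nat \<Rightarrow> nat \<Rightarrow> complex" where
  "Zpow d m j k = (if j = k then qpow d (m * int j) else 0)"

text \<open>X |k> = |k-1 mod d>, hence X^m |k> = |k-m mod d>\<close>
definition Xpow :: "nat \<Rightarrow> int \<Rightarrow> nat \<Rightarrow> nat \<Rightarrow> complex" where
  "Xpow d m j k = (if int j = (int k - m) mod int d then 1 else 0)"

definition Xm :: "nat \<Rightarrow> nat \<Rightarrow> nat \<Rightarrow> complex" where "Xm d = Xpow d 1"
definition Zm :: "nat \<Rightarrow> nat \<Rightarrow> nat \<Rightarrow> complex" where "Zm d = Zpow d 1"
definition Zdag :: "nat \<Rightarrow> nat \<Rightarrow> nat \<Rightarrow> complex" where "Zdag d = Zpow d (-1)"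

definition id1 :: "nat \<Rightarrow> nat \<Rightarrow> complex" where
  "id1 j k = (if j = k then 1 else 0)"

definition mmul1 :: "nat \<Rightarrow> (nat \<Rightarrow> nat \<Rightarrow> complex) \<Rightarrow> (nat \<Rightarrow> nat \<Rightarrow> complex) \<Rightarrow> nat \<Rightarrow> nat \<Rightarrow> complex" where
  "mmul1 d A B j k = (\<Sum>l<d. A j l * B l k)"

definition adj1 :: "(nat \<Rightarrow> nat \<Rightarrow> complex) \<Rightarrow> nat \<Rightarrow> nat \<Rightarrow> complex" where
  "adj1 A j k = cnj (A k j)"

definition unitary1 :: "nat \<Rightarrow> (nat \<Rightarrow> nat \<Rightarrow> complex) \<Rightarrow> bool" where
  "unitary1 d u \<longleftrightarrow> (\<forall>j<d. \<forall>k<d. mmul1 d u (adj1 u) j k = id1 j k \<and> mmul1 d (adj1 u) u j k = id1 j k)"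

definition xvec :: "nat \<Rightarrow> nat \<Rightarrow> nat \<Rightarrow> complex" where
  "xvec d s k = qpow d (int s * int k) / complex_of_real (sqrt (real d))"

definition proj1 :: "(nat \<Rightarrow> complex) \<Rightarrow> nat \<Rightarrow> nat \<Rightarrow> complex" where
  "proj1 v j k = v j * cnj (v k)"

definition ucol :: "(nat \<Rightarrow> nat \<Rightarrow> complex) \<Rightarrow> nat \<Rightarrow> nat \<Rightarrow> complex" where
  "ucol u s j = u j s"

definition nmul :: "nat \<Rightarrow> nat \<Rightarrow> ((nat \<Rightarrow> nat) \<Rightarrow> (nat \<Rightarrow> nat) \<Rightarrow> complex)
   \<Rightarrow> ((nat \<Rightarrow> nat) \<Rightarrow> (nat \<Rightarrow> nat) \<Rightarrow> complex) \<Rightarrow> (nat \<Rightarrow> nat) \<Rightarrow> (nat \<Rightarrow> nat) \<Rightarrow> complex" where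
  "nmul d n A B j k = (\<Sum>l\<in>cfgs {..<n} d. A j l * B l k)"

definition nadj :: "((nat \<Rightarrow> nat) \<Rightarrow> (nat \<Rightarrow> nat) \<Rightarrow> complex) \<Rightarrow> (nat \<Rightarrow> nat) \<Rightarrow> (nat \<Rightarrow> nat) \<Rightarrow> complex" where
  "nadj A j k = cnj (A k j)"

definition nid :: "(nat \<Rightarrow> nat) \<Rightarrow> (nat \<Rightarrow> nat) \<Rightarrow> complex" where
  "nid j k = (if j = k then 1 else 0)"

definition nunitary :: "nat \<Rightarrow> nat \<Rightarrow> ((nat \<Rightarrow> nat) \<Rightarrow> (nat \<Rightarrow> nat) \<Rightarrow> complex) \<Rightarrow> bool" where
  "nunitary d n U \<longleftrightarrow> (\<forall>j\<in>cfgs {..<n} d. \<forall>k\<in>cfgs {..<n} d.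
      nmul d n U (nadj U) j k = nid j k \<and> nmul d n (nadj U) U j k = nid j k)"

definition ntens :: "nat \<Rightarrow> (nat \<Rightarrow> nat \<Rightarrow> nat \<Rightarrow> complex) \<Rightarrow> (nat \<Rightarrow> nat) \<Rightarrow> (nat \<Rightarrow> nat) \<Rightarrow> complex" where
  "ntens n M j k = (\<Prod>i<n. M i (j i) (k i))"

definition nlocal :: "nat \<Rightarrow> nat \<Rightarrow> (nat \<Rightarrow> nat \<Rightarrow> complex) \<Rightarrow> (nat \<Rightarrow> nat) \<Rightarrow> (nat \<Rightarrow> nat) \<Rightarrow> complex" where
  "nlocal n i M = ntens n (\<lambda>l. if l = i then M else id1)"

definition nmv :: "nat \<Rightarrow> nat \<Rightarrow> ((nat \<Rightarrow> nat) \<Rightarrow> (nat \<Rightarrow> nat) \<Rightarrow> complex) \<Rightarrow> ((nat \<Rightarrow> nat) \<Rightarrow> complex) \<Rightarrow> (nat \<Rightarrow> nat) \<Rightarrow> complex" where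
  "nmv d n A \<psi> j = (if j \<in> cfgs {..<n} d then (\<Sum>k\<in>cfgs {..<n} d. A j k * \<psi> k) else 0)"

definition restr :: "'v set \<Rightarrow> ('v \<Rightarrow> nat) \<Rightarrow> 'v \<Rightarrow> nat" where
  "restr A k = (\<lambda>a. if a \<in> A then k a else 0)"

text \<open>tensor product of a state on A with a state on B (A, B disjoint)\<close>
definition tens :: "nat \<Rightarrow> 'v set \<Rightarrow> (('v \<Rightarrow> nat) \<Rightarrow> complex) \<Rightarrow> 'v set \<Rightarrow> (('v \<Rightarrow> nat) \<Rightarrow> complex)
   \<Rightarrow> ('v \<Rightarrow> nat) \<Rightarrow> complex" where
  "tens d A \<psi> B \<phi> k = (if k \<in> cfgs (A \<union> B) d then \<psi> (restr A k) * \<phi> (restr B k) else 0)"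

definition prod_state :: "nat \<Rightarrow> 'v set \<Rightarrow> ('v \<Rightarrow> nat \<Rightarrow> complex) \<Rightarrow> ('v \<Rightarrow> nat) \<Rightarrow> complex" where
  "prod_state d A f k = (if k \<in> cfgs A d then (\<Prod>a\<in>A. f a (k a)) else 0)"

definition plus_state :: "nat \<Rightarrow> 'v set \<Rightarrow> ('v \<Rightarrow> nat) \<Rightarrow> complex" where
  "plus_state d A = prod_state d A (\<lambda>a. xvec d 0)"

text \<open>an n-qudit state placed on qudits L 0, ..., L (n-1) (i-th factor at L i)\<close>
definition emb :: "nat \<Rightarrow> (nat \<Rightarrow> 'v) \<Rightarrow> nat \<Rightarrow> ((nat \<Rightarrow> nat) \<Rightarrow> complex) \<Rightarrow> ('v \<Rightarrow> nat) \<Rightarrow> complex" where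
  "emb d L n \<psi> k = (if k \<in> cfgs (L ` {..<n}) d then \<psi> (\<lambda>i. if i < n then k (L i) else 0) else 0)"

text \<open>tensor product of single-qudit operators M a acting on the qudits a \<in> A \<subseteq> C
  (identity elsewhere), on states of the qudits C\<close>
definition op_sites :: "nat \<Rightarrow> 'v set \<Rightarrow> 'v set \<Rightarrow> ('v \<Rightarrow> nat \<Rightarrow> nat \<Rightarrow> complex)
   \<Rightarrow> (('v \<Rightarrow> nat) \<Rightarrow> complex) \<Rightarrow> ('v \<Rightarrow> nat) \<Rightarrow> complex" where
  "op_sites d C A M \<psi> k = (if k \<in> cfgs C d then
      (\<Sum>j\<in>cfgs A d. (\<Prod>a\<in>A. M a (k a) (j a)) * \<psi> (override_on k j A)) else 0)"

definition op_at :: "nat \<Rightarrow> 'v set \<Rightarrow> 'v \<Rightarrow> (nat \<Rightarrow> nat \<Rightarrow> complex)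
   \<Rightarrow> (('v \<Rightarrow> nat) \<Rightarrow> complex) \<Rightarrow> ('v \<Rightarrow> nat) \<Rightarrow> complex" where
  "op_at d C a M = op_sites d C {a} (\<lambda>_. M)"

text \<open>(A)_{L}: an n-qudit operator A acting on the qudits L 0, ..., L (n-1)\<close>
definition op_on :: "nat \<Rightarrow> 'v set \<Rightarrow> (nat \<Rightarrow> 'v) \<Rightarrow> nat
   \<Rightarrow> ((nat \<Rightarrow> nat) \<Rightarrow> (nat \<Rightarrow> nat) \<Rightarrow> complex)
   \<Rightarrow> (('v \<Rightarrow> nat) \<Rightarrow> complex) \<Rightarrow> ('v \<Rightarrow> nat) \<Rightarrow> complex" where
  "op_on d C L n A \<psi> k = (if k \<in> cfgs C d then
      (\<Sum>j\<in>cfgs {..<n} d. A (\<lambda>i. if i < n then k (L i) else 0) j *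
          \<psi> (\<lambda>a. if a \<in> L ` {..<n} then j (the_inv_into {..<n} L a) else k a)) else 0)"

text \<open>cluster state generator S = prod_{edges {a,b}} S_ab, S_ab |j>|k> = q^(jk) |j>|k>;
  edges are two-element subsets of C\<close>
definition cluster_gen :: "nat \<Rightarrow> 'v set \<Rightarrow> 'v set set
   \<Rightarrow> (('v \<Rightarrow> nat) \<Rightarrow> complex) \<Rightarrow> ('v \<Rightarrow> nat) \<Rightarrow> complex" where
  "cluster_gen d C E \<psi> k = (if k \<in> cfgs C d then
      (\<Prod>e\<in>E. qpow d (\<Prod>a\<in>e. int (k a))) * \<psi> k else 0)"

definition cluster_state :: "nat \<Rightarrow> 'v set \<Rightarrow> 'v set set \<Rightarrow> ('v \<Rightarrow> nat) \<Rightarrow> complex" where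
  "cluster_state d C E = cluster_gen d C E (plus_state d C)"

definition simple_graph_on :: "'v set \<Rightarrow> 'v set set \<Rightarrow> bool" where
  "simple_graph_on C E \<longleftrightarrow> finite C \<and> E \<subseteq> {{a, b} | a b. a \<in> C \<and> b \<in> C \<and> a \<noteq> b}"

end

(*
  Let Phi = P |phi> be the measured cluster state and Psi = (U^dagger)_O Phi.  Conjugating the
  hypotheses by U turns them into the pair stabilisers X_{I_i} X_{O_i} and Z_{I_i}^dagger Z_{O_i} of
  Psi, with eigenvalues q^(-lx_i) and q^(-lz_i).  On the computational basis the Z-equations confine
  the support of Psi to k(O_i) = k(I_i) - lz_i mod d, and the X-equations shift every pair back to
  k(I_i) = 0 at the cost of the phase q^(-lx_i k(I_i)).  Hence, up to a constant alpha and the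
  amplitude prod_a u_a(k_a, s_a) of the outcomes on C_M, Psi is a generalised Bell state between
  C_I and C_O, and alpha is nonzero because Phi is.
  Since S is diagonal, replacing |+> on C_I by the input state multiplies every amplitude by
  psi_in(k_I) (and by d^(n/2)); projecting C_I onto the states |x(s_I_i)> sums over k_I and leaves
  U U_Sigma psi_in on C_O, with c = alpha prod_i q^(-(lx_i + s_I_i) lz_i).
*)

theory Submission
  imports Defs
begin

section \<open>Roots of unity and residues\<close>

lemma qpow_add: "qpow d (a + b) = qpow d a * qpow d b"
  unfolding qpow_def by (simp add: cis_mult add_divide_distrib distrib_left)

lemma qpow_0 [simp]: "qpow d 0 = 1"
  unfolding qpow_def by simp

lemma qpow_neq_0 [simp]: "qpow d a \<noteq> 0"
  unfolding qpow_def by simp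

lemma cnj_qpow: "cnj (qpow d a) = qpow d (- a)"
  unfolding qpow_def by (simp add: cis_cnj)

lemma qpow_int_mult:
  assumes "0 < d"
  shows "qpow d (int d * m) = 1"
proof -
  have "2 * pi * real_of_int (int d * m) / real d = 2 * pi * real_of_int m"
    using assms by (simp add: field_simps)
  then show ?thesis
    unfolding qpow_def by simp
qed

lemma qpow_mod: "0 < d \<Longrightarrow> qpow d (a mod int d) = qpow d a"
  by (metis div_mult_mod_eq mult.commute mult_1 qpow_add qpow_int_mult)

lemma qpow_eq_1_imp_dvd:
  assumes "0 < d" and "qpow d a = 1"
  shows "int d dvd a"
proof -
  have "cos (2 * pi * real_of_int a / real d) = 1"
    using assms(2) unfolding qpow_def by (metis cis.sel(1) one_complex.sel(1))
  then obtain m :: int where "2 * pi * real_of_int a / real d = real_of_int m * 2 * pi"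
    using cos_one_2pi_int by blast
  then have "real_of_int a = real_of_int (m * int d)"
    using assms(1) by (simp add: field_simps)
  then show ?thesis by (metis dvd_triv_right of_int_eq_iff)
qed

lemma qpow_eq_qpow_iff: "0 < d \<Longrightarrow> qpow d a = qpow d b \<longleftrightarrow> a mod int d = b mod int d"
proof
  assume "0 < d" and "qpow d a = qpow d b"
  then have "qpow d (a - b) = 1"
    by (metis qpow_add qpow_neq_0 diff_add_cancel mult_cancel_right2)
  with \<open>0 < d\<close> show "a mod int d = b mod int d"
    by (simp add: qpow_eq_1_imp_dvd mod_eq_dvd_iff)
qed (metis qpow_mod)

lemma eq_mod_swap:
  assumes "a < d" and "b < d"
  shows "int a = (int b - z) mod int d \<longleftrightarrow> int b = (int a + z) mod int d"
proof -
  have "int a = (int b - z) mod int d \<longleftrightarrow> int a mod int d = (int b - z) mod int d"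
    using assms(1) by simp
  also have "\<dots> \<longleftrightarrow> int b mod int d = (int a + z) mod int d"
    by (simp add: mod_eq_dvd_iff algebra_simps) (metis dvd_minus_iff minus_diff_eq)
  also have "\<dots> \<longleftrightarrow> int b = (int a + z) mod int d"
    using assms(2) by simp
  finally show ?thesis .
qed

lemma nat_mod_diff_add_cancel:
  assumes "0 < d" and "b < d"
  shows "(nat ((int b - int a) mod int d) + a) mod d = b"
proof -
  have "int ((nat ((int b - int a) mod int d) + a) mod d) = ((int b - int a) mod int d + int a) mod int d"
    using assms(1) by (simp add: zmod_int)
  also have "\<dots> = int b"
    using assms(2) by (simp add: mod_add_left_eq)
  finally show ?thesis
    by simp
qed

section \<open>Configurations and registers\<close>

lemma finite_cfgs [simp]: "finite A \<Longrightarrow> finite (cfgs A d)"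
proof -
  assume "finite A"
  have "cfgs A d \<subseteq> {f. \<forall>x. (x \<in> A \<longrightarrow> f x \<in> {..<d}) \<and> (x \<notin> A \<longrightarrow> f x = 0)}"
    unfolding cfgs_def by auto
  moreover have "finite {f. \<forall>x. (x \<in> A \<longrightarrow> f x \<in> {..<d}) \<and> (x \<notin> A \<longrightarrow> f x = (0::nat))}"
    by (rule finite_set_of_finite_funs[OF \<open>finite A\<close>]) simp
  ultimately show ?thesis
    by (rule finite_subset)
qed

lemma cfgsD: "k \<in> cfgs A d \<Longrightarrow> a \<in> A \<Longrightarrow> k a < d"
  unfolding cfgs_def by auto

lemma cfgs_outside: "k \<in> cfgs A d \<Longrightarrow> a \<notin> A \<Longrightarrow> k a = 0"
  unfolding cfgs_def by auto

lemma cfgsI: "(\<And>a. a \<in> A \<Longrightarrow> k a < d) \<Longrightarrow> (\<And>a. a \<notin> A \<Longrightarrow> k a = 0) \<Longrightarrow> k \<in> cfgs A d"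
  unfolding cfgs_def by auto

lemma cfgs_upd: "k \<in> cfgs A d \<Longrightarrow> a \<in> A \<Longrightarrow> r < d \<Longrightarrow> k(a := r) \<in> cfgs A d"
  unfolding cfgs_def by auto

lemma cfgs_lessThan_eqI:
  "k \<in> cfgs {..<n} d \<Longrightarrow> l \<in> cfgs {..<n} d \<Longrightarrow> (\<And>i. i < n \<Longrightarrow> k i = l i) \<Longrightarrow> k = l"
  by (rule ext) (metis cfgs_outside lessThan_iff)

text \<open>A register is an injective labelling \<open>L\<close> of \<open>n\<close> qudits; \<open>reg_get\<close> and
  \<open>reg_put\<close> are the read and overwrite maps built into \<^const>\<open>op_on\<close> and \<^const>\<open>emb\<close>.\<close>

definition reg_get :: "(nat \<Rightarrow> 'v) \<Rightarrow> nat \<Rightarrow> ('v \<Rightarrow> nat) \<Rightarrow> nat \<Rightarrow> nat" where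
  "reg_get L n k = (\<lambda>i. if i < n then k (L i) else 0)"

definition reg_put :: "(nat \<Rightarrow> 'v) \<Rightarrow> nat \<Rightarrow> ('v \<Rightarrow> nat) \<Rightarrow> (nat \<Rightarrow> nat) \<Rightarrow> 'v \<Rightarrow> nat" where
  "reg_put L n k j = (\<lambda>a. if a \<in> L ` {..<n} then j (the_inv_into {..<n} L a) else k a)"

lemma reg_put_outside [simp]: "a \<notin> L ` {..<n} \<Longrightarrow> reg_put L n k j a = k a"
  unfolding reg_put_def by simp

lemma reg_put_put [simp]: "reg_put L n (reg_put L n k j) l = reg_put L n k l"
  unfolding reg_put_def by auto

lemma reg_get_cfgs: "k \<in> cfgs C d \<Longrightarrow> L ` {..<n} \<subseteq> C \<Longrightarrow> reg_get L n k \<in> cfgs {..<n} d"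
  unfolding reg_get_def cfgs_def by auto

lemma reg_put_upd: "a \<notin> L ` {..<n} \<Longrightarrow> reg_put L n (k(a := r)) j = (reg_put L n k j)(a := r)"
  unfolding reg_put_def by auto

lemma reg_get_upd: "a \<notin> L ` {..<n} \<Longrightarrow> reg_get L n (k(a := r)) = reg_get L n k"
  unfolding reg_get_def by (rule ext) (metis fun_upd_other image_eqI lessThan_iff)

context
  fixes L :: "nat \<Rightarrow> 'v" and n :: nat
  assumes inj: "inj_on L {..<n}"
begin

lemma the_inv_into_reg [simp]: "i < n \<Longrightarrow> the_inv_into {..<n} L (L i) = i"
  using inj by (simp add: the_inv_into_f_f)

lemma reg_put_at [simp]: "i < n \<Longrightarrow> reg_put L n k j (L i) = j i"
  unfolding reg_put_def by simp

lemma reg_put_cfgs: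
  "k \<in> cfgs C d \<Longrightarrow> j \<in> cfgs {..<n} d \<Longrightarrow> L ` {..<n} \<subseteq> C \<Longrightarrow> reg_put L n k j \<in> cfgs C d"
  unfolding reg_put_def cfgs_def by auto

lemma reg_get_put: "j \<in> cfgs {..<n} d \<Longrightarrow> reg_get L n (reg_put L n k j) = j"
  unfolding reg_get_def by (auto simp: cfgs_outside)

lemma reg_put_get [simp]: "reg_put L n k (reg_get L n k) = k"
  unfolding reg_put_def reg_get_def by (rule ext) auto

end

section \<open>Operators and states\<close>

lemma sum_eq_single_nonzero:
  "finite A \<Longrightarrow> z \<in> A \<Longrightarrow> (\<And>x. x \<in> A \<Longrightarrow> x \<noteq> z \<Longrightarrow> f x = 0) \<Longrightarrow> sum f A = f z"
  by (metis sum.remove sum.neutral add_0_right DiffE insertCI)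

lemma op_at_eq:
  "op_at d C a M \<psi> k = (if k \<in> cfgs C d then (\<Sum>r<d. M (k a) r * \<psi> (k(a := r))) else 0)"
proof -
  let ?e = "\<lambda>r. ((\<lambda>_. 0)(a := r)) :: 'a \<Rightarrow> nat"
  have "cfgs {a} d = ?e ` {..<d}"
  proof (intro equalityI subsetI)
    fix j assume "j \<in> cfgs {a} d"
    then have "j = ?e (j a)" and "j a < d"
      by (auto simp: cfgs_outside cfgsD)
    then show "j \<in> ?e ` {..<d}" by blast
  qed (auto simp: cfgs_def)
  moreover have "inj_on ?e {..<d}"
    by (rule inj_onI) (metis fun_upd_same)
  moreover have "override_on k (?e r) {a} = k(a := r)" for r
    by (auto simp: override_on_def)
  ultimately show ?thesis
    unfolding op_at_def op_sites_def by (simp add: sum.reindex)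
qed

lemma op_at_Xm:
  assumes "0 < d" and "k \<in> cfgs C d" and "a \<in> C"
  shows "op_at d C a (Xm d) \<psi> k = \<psi> (k(a := (k a + 1) mod d))"
proof -
  have ka: "k a < d"
    using assms by (simp add: cfgsD)
  have "Xm d (k a) r = (if r = (k a + 1) mod d then 1 else 0)" if "r < d" for r
  proof -
    have "int (k a) = (int r - 1) mod int d \<longleftrightarrow> int r = (int (k a) + 1) mod int d"
      using ka that by (rule eq_mod_swap)
    also have "\<dots> \<longleftrightarrow> r = (k a + 1) mod d"
      by (metis of_nat_1 of_nat_add of_nat_eq_iff zmod_int)
    finally show ?thesis
      unfolding Xm_def Xpow_def by simp
  qed
  then have "op_at d C a (Xm d) \<psi> k = (\<Sum>r<d. (if r = (k a + 1) mod d then 1 else 0) * \<psi> (k(a := r)))"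
    using assms(2) by (simp add: op_at_eq)
  also have "\<dots> = \<psi> (k(a := (k a + 1) mod d))"
    using assms(1) by (subst sum_eq_single_nonzero[where z = "(k a + 1) mod d"]) auto
  finally show ?thesis .
qed

lemma op_at_Zpow:
  assumes "k \<in> cfgs C d" and "a \<in> C"
  shows "op_at d C a (Zpow d m) \<psi> k = qpow d (m * int (k a)) * \<psi> k"
proof -
  have "op_at d C a (Zpow d m) \<psi> k = (\<Sum>r<d. Zpow d m (k a) r * \<psi> (k(a := r)))"
    using assms(1) by (simp add: op_at_eq)
  also have "\<dots> = Zpow d m (k a) (k a) * \<psi> (k(a := k a))"
    using assms by (intro sum_eq_single_nonzero) (auto simp: Zpow_def cfgsD)
  finally show ?thesis
    by (simp add: Zpow_def)
qed

lemma op_sites_mult_invariant: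
  "(\<And>k j. f (override_on k j A) = f k) \<Longrightarrow>
    op_sites d C A M (\<lambda>k. f k * \<psi> k) = (\<lambda>k. f k * op_sites d C A M \<psi> k)"
  unfolding op_sites_def by (rule ext) (simp add: sum_distrib_left ac_simps)

lemma op_on_eq:
  "op_on d C L n A \<psi> k = (if k \<in> cfgs C d then
     (\<Sum>j\<in>cfgs {..<n} d. A (reg_get L n k) j * \<psi> (reg_put L n k j)) else 0)"
  unfolding op_on_def reg_get_def reg_put_def by simp

lemma op_on_scale: "op_on d C L n A (\<lambda>k. c * \<psi> k) = (\<lambda>k. c * op_on d C L n A \<psi> k)"
  by (rule ext) (simp add: op_on_eq sum_distrib_left mult.left_commute)

lemma nlocal_upd: "i < n \<Longrightarrow> nlocal n i M x (x(i := r)) = M (x i) r"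
  unfolding nlocal_def ntens_def by (subst prod.remove[of _ i]) (auto simp: id1_def)

lemma nlocal_eq_0: "l < n \<Longrightarrow> l \<noteq> i \<Longrightarrow> y l \<noteq> x l \<Longrightarrow> nlocal n i M x y = 0"
  unfolding nlocal_def ntens_def by (rule prod_zero) (auto simp: id1_def intro!: bexI[of _ l])

lemma sum_nlocal:
  assumes i: "i < n" and x: "x \<in> cfgs {..<n} d"
  shows "(\<Sum>j\<in>cfgs {..<n} d. nlocal n i M x j * g j) = (\<Sum>r<d. M (x i) r * g (x(i := r)))"
proof -
  let ?I = "(\<lambda>r. x(i := r)) ` {..<d}"
  have "(\<Sum>j\<in>cfgs {..<n} d. nlocal n i M x j * g j) = (\<Sum>j\<in>?I. nlocal n i M x j * g j)"
  proof (rule sum.mono_neutral_right)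
    show "?I \<subseteq> cfgs {..<n} d"
      using x i by (auto intro: cfgs_upd)
    show "\<forall>j\<in>cfgs {..<n} d - ?I. nlocal n i M x j * g j = 0"
    proof
      fix j assume j: "j \<in> cfgs {..<n} d - ?I"
      have "\<exists>l<n. l \<noteq> i \<and> j l \<noteq> x l"
      proof (rule ccontr)
        assume "\<not> ?thesis"
        then have "j = x(i := j i)"
          using j x i by (intro cfgs_lessThan_eqI[of _ n d]) (auto intro: cfgs_upd cfgsD)
        moreover have "j i < d"
          using j i by (auto intro: cfgsD)
        ultimately show False
          using j by blast
      qed
      then show "nlocal n i M x j * g j = 0"
        using nlocal_eq_0 by auto
    qed
  qed simp
  also have "\<dots> = (\<Sum>r<d. M (x i) r * g (x(i := r)))"
  proof -
    have "inj_on (\<lambda>r. x(i := r)) {..<d}"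
      by (rule inj_onI) (metis fun_upd_same)
    then show ?thesis
      by (simp add: sum.reindex nlocal_upd[OF i])
  qed
  finally show ?thesis .
qed

context
  fixes L :: "nat \<Rightarrow> 'v" and n :: nat and C :: "'v set" and d :: nat
  assumes inj: "inj_on L {..<n}" and sub: "L ` {..<n} \<subseteq> C"
begin

lemma op_on_nmul: "op_on d C L n A (op_on d C L n B \<psi>) = op_on d C L n (nmul d n A B) \<psi>"
proof (rule ext)
  fix k
  show "op_on d C L n A (op_on d C L n B \<psi>) k = op_on d C L n (nmul d n A B) \<psi> k"
  proof (cases "k \<in> cfgs C d")
    case True
    have "op_on d C L n A (op_on d C L n B \<psi>) k =
      (\<Sum>j\<in>cfgs {..<n} d. \<Sum>l\<in>cfgs {..<n} d. A (reg_get L n k) j * B j l * \<psi> (reg_put L n k l))"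
      using True inj sub
      by (simp add: op_on_eq reg_put_cfgs reg_get_put sum_distrib_left mult.assoc cong: sum.cong)
    also have "\<dots> = op_on d C L n (nmul d n A B) \<psi> k"
      using True by (subst sum.swap) (simp add: op_on_eq nmul_def sum_distrib_right)
    finally show ?thesis .
  qed (simp add: op_on_eq)
qed

lemma op_on_cong:
  "(\<And>x y. x \<in> cfgs {..<n} d \<Longrightarrow> y \<in> cfgs {..<n} d \<Longrightarrow> A x y = B x y) \<Longrightarrow>
    op_on d C L n A \<psi> = op_on d C L n B \<psi>"
  by (rule ext) (simp add: op_on_eq reg_get_cfgs[OF _ sub] cong: sum.cong)

lemma op_on_nid:
  assumes "\<And>k. k \<notin> cfgs C d \<Longrightarrow> \<psi> k = 0"
  shows "op_on d C L n nid \<psi> = \<psi>"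
proof (rule ext)
  fix k
  show "op_on d C L n nid \<psi> k = \<psi> k"
  proof (cases "k \<in> cfgs C d")
    case True
    then have "op_on d C L n nid \<psi> k = nid (reg_get L n k) (reg_get L n k) * \<psi> (reg_put L n k (reg_get L n k))"
      unfolding op_on_eq
      by (simp, intro sum_eq_single_nonzero) (auto simp: nid_def reg_get_cfgs[OF _ sub])
    then show ?thesis
      by (simp add: nid_def inj)
  qed (simp add: op_on_eq assms)
qed

lemma op_on_unitary_cancel:
  assumes "nunitary d n U" and "\<And>k. k \<notin> cfgs C d \<Longrightarrow> \<psi> k = 0"
  shows "op_on d C L n (nadj U) (op_on d C L n U \<psi>) = \<psi>"
    and "op_on d C L n U (op_on d C L n (nadj U) \<psi>) = \<psi>"
proof -
  have unit: "nmul d n (nadj U) U x y = nid x y" "nmul d n U (nadj U) x y = nid x y"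
    if "x \<in> cfgs {..<n} d" "y \<in> cfgs {..<n} d" for x y
    using assms(1) that unfolding nunitary_def by blast+
  show "op_on d C L n (nadj U) (op_on d C L n U \<psi>) = \<psi>"
    by (simp only: op_on_nmul op_on_cong[of _ nid, OF unit(1)])
      (rule op_on_nid[OF assms(2)])
  show "op_on d C L n U (op_on d C L n (nadj U) \<psi>) = \<psi>"
    by (simp only: op_on_nmul op_on_cong[of _ nid, OF unit(2)])
      (rule op_on_nid[OF assms(2)])
qed

lemma op_at_op_on_commute:
  assumes "a \<in> C" and "a \<notin> L ` {..<n}"
  shows "op_at d C a M (op_on d C L n A \<psi>) = op_on d C L n A (op_at d C a M \<psi>)"
proof (rule ext)
  fix k
  show "op_at d C a M (op_on d C L n A \<psi>) k = op_on d C L n A (op_at d C a M \<psi>) k"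
  proof (cases "k \<in> cfgs C d")
    case True
    have "op_at d C a M (op_on d C L n A \<psi>) k =
       (\<Sum>r<d. \<Sum>j\<in>cfgs {..<n} d. M (k a) r * A (reg_get L n k) j * \<psi> ((reg_put L n k j)(a := r)))"
      using True assms
      by (auto simp: op_at_eq op_on_eq cfgs_upd reg_get_upd reg_put_upd sum_distrib_left mult.assoc
          intro!: sum.cong)
    also have "\<dots> = op_on d C L n A (op_at d C a M \<psi>) k"
      using True assms
      by (subst sum.swap) (simp add: op_at_eq op_on_eq reg_put_cfgs[OF inj _ _ sub] sum_distrib_left
          ac_simps)
    finally show ?thesis .
  qed (simp add: op_on_eq op_at_eq)
qed

lemma op_on_nlocal:
  assumes i: "i < n"
  shows "op_on d C L n (nlocal n i M) \<psi> = op_at d C (L i) M \<psi>"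
proof (rule ext)
  fix k
  show "op_on d C L n (nlocal n i M) \<psi> k = op_at d C (L i) M \<psi> k"
  proof (cases "k \<in> cfgs C d")
    case True
    have "reg_put L n k ((reg_get L n k)(i := r)) = k(L i := r)" for r
      using inj i by (auto simp: reg_put_def reg_get_def the_inv_into_f_f inj_on_eq_iff intro!: ext)
    then show ?thesis
      using True i
      by (simp add: op_on_eq op_at_eq sum_nlocal reg_get_cfgs[OF True sub]) (simp add: reg_get_def)
  qed (simp add: op_on_eq op_at_eq)
qed

end

definition cfg_shift :: "nat \<Rightarrow> nat \<Rightarrow> (nat \<Rightarrow> int) \<Rightarrow> (nat \<Rightarrow> nat) \<Rightarrow> nat \<Rightarrow> nat" where
  "cfg_shift d n b l = (\<lambda>i. if i < n then nat ((int (l i) + b i) mod int d) else 0)"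

lemma cfg_shift_cfgs: "0 < d \<Longrightarrow> cfg_shift d n b l \<in> cfgs {..<n} d"
  unfolding cfg_shift_def by (intro cfgsI) (auto simp: nat_less_iff)

lemma cfg_shift_inverse:
  assumes "0 < d" and "l \<in> cfgs {..<n} d"
  shows "cfg_shift d n (\<lambda>i. - b i) (cfg_shift d n b l) = l"
proof (rule cfgs_lessThan_eqI[OF cfg_shift_cfgs[OF assms(1)] assms(2)])
  fix i assume "i < n"
  moreover have "l i < d"
    using assms(2) \<open>i < n\<close> by (simp add: cfgsD)
  ultimately show "cfg_shift d n (\<lambda>i. - b i) (cfg_shift d n b l) i = l i"
    using assms(1) by (simp add: cfg_shift_def mod_diff_left_eq)
qed

lemma mmul1_Zpow_Xpow:
  assumes "j < d" and "k < d"
  shows "mmul1 d (Zpow d a) (Xpow d b) j k = (if k = nat ((int j + b) mod int d) then qpow d (a * int j) else 0)"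
proof -
  have "mmul1 d (Zpow d a) (Xpow d b) j k = Zpow d a j j * Xpow d b j k"
    unfolding mmul1_def using assms(1) by (intro sum_eq_single_nonzero) (auto simp: Zpow_def)
  moreover have "int j = (int k - b) mod int d \<longleftrightarrow> int k = (int j + b) mod int d"
    using assms by (rule eq_mod_swap)
  moreover have "int k = (int j + b) mod int d \<longleftrightarrow> k = nat ((int j + b) mod int d)"
    using assms by (auto simp: eq_commute[of k] nat_eq_iff)
  ultimately show ?thesis
    by (simp add: Zpow_def Xpow_def)
qed

lemma ntens_Zpow_Xpow:
  assumes "0 < d" and "l \<in> cfgs {..<n} d" and "m \<in> cfgs {..<n} d"
  shows "ntens n (\<lambda>i. mmul1 d (Zpow d (a i)) (Xpow d (b i))) l m =
    (if m = cfg_shift d n b l then \<Prod>i<n. qpow d (a i * int (l i)) else 0)"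
proof -
  have "m = cfg_shift d n b l \<longleftrightarrow> (\<forall>i<n. m i = cfg_shift d n b l i)"
    using cfgs_lessThan_eqI[OF assms(3) cfg_shift_cfgs[OF assms(1)]] by blast
  then have "m = cfg_shift d n b l \<longleftrightarrow> (\<forall>i<n. m i = nat ((int (l i) + b i) mod int d))"
    by (simp add: cfg_shift_def)
  moreover have "ntens n (\<lambda>i. mmul1 d (Zpow d (a i)) (Xpow d (b i))) l m =
      (\<Prod>i<n. if m i = nat ((int (l i) + b i) mod int d) then qpow d (a i * int (l i)) else 0)"
    unfolding ntens_def using assms(2,3) by (intro prod.cong) (auto simp: mmul1_Zpow_Xpow cfgsD)
  ultimately show ?thesis
    by (auto simp: prod_zero)
qed

lemma nmv_ntens_Zpow_Xpow:
  assumes "0 < d" and "l \<in> cfgs {..<n} d"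
  shows "nmv d n (ntens n (\<lambda>i. mmul1 d (Zpow d (a i)) (Xpow d (b i)))) \<psi> l =
    (\<Prod>i<n. qpow d (a i * int (l i))) * \<psi> (cfg_shift d n b l)"
proof -
  have "nmv d n (ntens n (\<lambda>i. mmul1 d (Zpow d (a i)) (Xpow d (b i)))) \<psi> l =
      ntens n (\<lambda>i. mmul1 d (Zpow d (a i)) (Xpow d (b i))) l (cfg_shift d n b l) * \<psi> (cfg_shift d n b l)"
    unfolding nmv_def using assms
    by (simp, intro sum_eq_single_nonzero) (auto simp: ntens_Zpow_Xpow cfg_shift_cfgs)
  then show ?thesis
    using assms by (simp add: ntens_Zpow_Xpow cfg_shift_cfgs)
qed

lemma restr_cfgs: "k \<in> cfgs C d \<Longrightarrow> A \<subseteq> C \<Longrightarrow> restr A k \<in> cfgs A d"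
  unfolding restr_def cfgs_def by auto

lemma restr_restr: "A \<subseteq> B \<Longrightarrow> restr A (restr B k) = restr A k"
  unfolding restr_def by (auto intro!: ext)

lemma prod_state_restr: "k \<in> cfgs C d \<Longrightarrow> A \<subseteq> C \<Longrightarrow> prod_state d A f (restr A k) = (\<Prod>a\<in>A. f a (k a))"
  unfolding prod_state_def by (simp add: restr_cfgs) (simp add: restr_def)

lemma plus_state_eq: "k \<in> cfgs A d \<Longrightarrow> plus_state d A k = (1 / complex_of_real (sqrt (real d))) ^ card A"
  unfolding plus_state_def prod_state_def xvec_def by simp

lemma emb_restr:
  "k \<in> cfgs C d \<Longrightarrow> L ` {..<n} \<subseteq> C \<Longrightarrow> emb d L n \<psi> (restr (L ` {..<n}) k) = \<psi> (reg_get L n k)"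
  unfolding emb_def reg_get_def by (simp add: restr_cfgs) (auto simp: restr_def intro!: arg_cong[where f = \<psi>])

lemma op_sites_register:
  assumes inj: "inj_on L {..<n}" and k: "k \<in> cfgs C d"
  shows "op_sites d C (L ` {..<n}) M \<chi> k =
    (\<Sum>m\<in>cfgs {..<n} d. (\<Prod>i<n. M (L i) (k (L i)) (m i)) * \<chi> (reg_put L n k m))"
proof -
  let ?p = "reg_put L n (\<lambda>_. 0)"
  have "cfgs (L ` {..<n}) d = ?p ` cfgs {..<n} d"
  proof (intro equalityI subsetI)
    fix j assume j: "j \<in> cfgs (L ` {..<n}) d"
    then have "j = ?p (reg_get L n j)"
      using inj
      by (auto simp: reg_put_def reg_get_def cfgs_outside the_inv_into_into f_the_inv_into_f intro!: ext)
    moreover have "reg_get L n j \<in> cfgs {..<n} d"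
      using j by (rule reg_get_cfgs) simp
    ultimately show "j \<in> ?p ` cfgs {..<n} d"
      by blast
  qed (use inj in \<open>auto simp: cfgs_def reg_put_def the_inv_into_into\<close>)
  moreover have "inj_on ?p (cfgs {..<n} d)"
    by (rule inj_onI) (metis inj reg_get_put)
  moreover have "override_on k (?p m) (L ` {..<n}) = reg_put L n k m" for m
    by (auto simp: override_on_def reg_put_def)
  moreover have "(\<Prod>a\<in>L ` {..<n}. M a (k a) (?p m a)) = (\<Prod>i<n. M (L i) (k (L i)) (m i))" for m
    using inj by (simp add: prod.reindex)
  ultimately show ?thesis
    unfolding op_sites_def using k by (simp add: sum.reindex)
qed

lemma cnj_xvec_mult_qpow:
  assumes "0 < d"
  shows "cnj (xvec d t j) * qpow d (- l * int j) =
    qpow d (- (l + int t) * z) / complex_of_real (sqrt (real d)) *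
    qpow d ((- l - int t) * int (nat ((int j - z) mod int d)))"
proof -
  have "qpow d ((- l - int t) * int (nat ((int j - z) mod int d))) = qpow d ((- l - int t) * (int j - z))"
    using assms by (metis qpow_mod mod_mult_right_eq pos_mod_sign of_nat_0_less_iff int_nat_eq)
  moreover have "qpow d (- (int t * int j)) * qpow d (- l * int j) =
      qpow d (- (l + int t) * z) * qpow d ((- l - int t) * (int j - z))"
    by (simp only: qpow_add[symmetric]) (simp add: algebra_simps)
  ultimately show ?thesis
    unfolding xvec_def by (simp add: cnj_qpow)
qed

lemma nmv_nmv_ntens_Zpow_Xpow:
  assumes "0 < d" and "g \<in> cfgs {..<n} d"
  shows "nmv d n U (nmv d n (ntens n (\<lambda>i. mmul1 d (Zpow d (a i)) (Xpow d (b i)))) \<psi>) g =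
    (\<Sum>m\<in>cfgs {..<n} d. U g (cfg_shift d n (\<lambda>i. - b i) m) *
      (\<Prod>i<n. qpow d (a i * int (cfg_shift d n (\<lambda>i. - b i) m i))) * \<psi> m)"
proof -
  have "nmv d n U (nmv d n (ntens n (\<lambda>i. mmul1 d (Zpow d (a i)) (Xpow d (b i)))) \<psi>) g =
      (\<Sum>l\<in>cfgs {..<n} d. U g l * ((\<Prod>i<n. qpow d (a i * int (l i))) * \<psi> (cfg_shift d n b l)))"
    unfolding nmv_def[of d n U] using assms by (simp add: nmv_ntens_Zpow_Xpow)
  also have "\<dots> = (\<Sum>m\<in>cfgs {..<n} d. U g (cfg_shift d n (\<lambda>i. - b i) m) *
      (\<Prod>i<n. qpow d (a i * int (cfg_shift d n (\<lambda>i. - b i) m i))) * \<psi> m)"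
    using cfg_shift_inverse[OF assms(1), of _ n b] cfg_shift_inverse[OF assms(1), of _ n "\<lambda>i. - b i"]
    by (intro sum.reindex_bij_witness[where i = "cfg_shift d n (\<lambda>i. - b i)" and j = "cfg_shift d n b"])
      (auto simp: cfg_shift_cfgs[OF assms(1)] mult.assoc)
  finally show ?thesis .
qed

section \<open>Pair stabilisers\<close>

lemma joint_shift_reduce:
  fixes f :: "('v \<Rightarrow> nat) \<Rightarrow> complex"
  assumes d: "0 < d" and ab: "a \<in> C" "b \<in> C" "a \<noteq> b" and k: "k \<in> cfgs C d"
    and shift: "\<And>k. k \<in> cfgs C d \<Longrightarrow>
      f (k(a := (k a + 1) mod d, b := (k b + 1) mod d)) = qpow d t * f k"
  shows "f k = qpow d (t * int (k a)) * f (k(a := 0, b := nat ((int (k b) - int (k a)) mod int d)))"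
proof -
  define o0 where "o0 = nat ((int (k b) - int (k a)) mod int d)"
  define k0 where "k0 = k(a := 0, b := o0)"
  \<comment> \<open>\<open>km m\<close> is reached from \<open>k0\<close> by \<open>m\<close> joint shifts, and \<open>km (k a) = k\<close>\<close>
  define km where "km m = k0(a := m mod d, b := (o0 + m) mod d)" for m
  have o0: "o0 < d"
    unfolding o0_def using d by (simp add: nat_less_iff)
  have km_cfgs: "km m \<in> cfgs C d" for m
    unfolding km_def k0_def using k ab d o0 by (intro cfgs_upd) auto
  have km_Suc: "km (Suc m) = (km m)(a := (km m a + 1) mod d, b := (km m b + 1) mod d)" for m
    unfolding km_def using ab by (auto simp: mod_Suc_eq)
  have km_eq: "f (km m) = qpow d (t * int m) * f k0" for m
  proof (induction m)
    case 0
    have "km 0 = k0"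
      unfolding km_def k0_def using o0 by auto
    then show ?case by simp
  next
    case (Suc m)
    have "f (km (Suc m)) = qpow d t * f (km m)"
      unfolding km_Suc by (rule shift[OF km_cfgs])
    also have "\<dots> = qpow d (t * int (Suc m)) * f k0"
      using Suc by (simp add: qpow_add algebra_simps)
    finally show ?case .
  qed
  have "k a < d" "k b < d"
    using k ab by (auto simp: cfgsD)
  then have "km (k a) = k"
    unfolding km_def k0_def o0_def using d by (auto simp: nat_mod_diff_add_cancel)
  then show ?thesis
    using km_eq[of "k a"] unfolding k0_def o0_def by simp
qed

locale io_registers =
  fixes d n :: nat and C :: "'v set" and Iq Oq :: "nat \<Rightarrow> 'v"
  assumes d_pos: "0 < d"
    and inj_Iq: "inj_on Iq {..<n}" and inj_Oq: "inj_on Oq {..<n}"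
    and Iq_in_C: "Iq ` {..<n} \<subseteq> C" and Oq_in_C: "Oq ` {..<n} \<subseteq> C"
    and Iq_Oq_disjoint: "Iq ` {..<n} \<inter> Oq ` {..<n} = {}"
begin

lemma Iq_mem_C [simp]: "i < n \<Longrightarrow> Iq i \<in> C"
  and Oq_mem_C [simp]: "i < n \<Longrightarrow> Oq i \<in> C"
  using Iq_in_C Oq_in_C by auto

lemma Iq_neq_Oq [simp]: "i < n \<Longrightarrow> j < n \<Longrightarrow> Iq i \<noteq> Oq j"
  and Oq_neq_Iq [simp]: "i < n \<Longrightarrow> j < n \<Longrightarrow> Oq j \<noteq> Iq i"
  using Iq_Oq_disjoint by auto

lemma Iq_notin_Oq [simp]: "i < n \<Longrightarrow> Iq i \<notin> Oq ` {..<n}"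
  and Oq_notin_Iq [simp]: "i < n \<Longrightarrow> Oq i \<notin> Iq ` {..<n}"
  using Iq_Oq_disjoint by auto

lemma Iq_eq_iff [simp]: "i < n \<Longrightarrow> j < n \<Longrightarrow> Iq i = Iq j \<longleftrightarrow> i = j"
  and Oq_eq_iff [simp]: "i < n \<Longrightarrow> j < n \<Longrightarrow> Oq i = Oq j \<longleftrightarrow> i = j"
  using inj_Iq inj_Oq by (auto dest: inj_onD)

end

text \<open>The two eigenvalue equations of the pair stabilisers \<open>X\<^sub>I\<^sub>i X\<^sub>O\<^sub>i\<close> and
  \<open>Z\<^sub>I\<^sub>i\<^sup>\<dagger> Z\<^sub>O\<^sub>i\<close>, written out on the coefficients of \<open>Psi\<close>.\<close>

locale pair_stabilized = io_registers +
  fixes Psi :: "('v \<Rightarrow> nat) \<Rightarrow> complex" and lx lz :: "nat \<Rightarrow> int"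
  assumes X_pair: "\<And>i k. i < n \<Longrightarrow> k \<in> cfgs C d \<Longrightarrow>
      Psi (k(Iq i := (k (Iq i) + 1) mod d, Oq i := (k (Oq i) + 1) mod d)) = qpow d (- lx i) * Psi k"
    and Z_pair: "\<And>i k. i < n \<Longrightarrow> k \<in> cfgs C d \<Longrightarrow>
      qpow d (int (k (Oq i)) - int (k (Iq i))) * Psi k = qpow d (- lz i) * Psi k"
begin

definition paired :: "('v \<Rightarrow> nat) \<Rightarrow> bool" where
  "paired k \<longleftrightarrow> (\<forall>i<n. int (k (Oq i)) = (int (k (Iq i)) - lz i) mod int d)"

lemma Psi_eq_0_unless_paired:
  assumes k: "k \<in> cfgs C d" and "\<not> paired k"
  shows "Psi k = 0"
proof (rule ccontr)
  assume "Psi k \<noteq> 0"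
  obtain i where i: "i < n" and ne: "int (k (Oq i)) \<noteq> (int (k (Iq i)) - lz i) mod int d"
    using \<open>\<not> paired k\<close> unfolding paired_def by blast
  have "qpow d (int (k (Oq i)) - int (k (Iq i))) = qpow d (- lz i)"
    using Z_pair[OF i k] \<open>Psi k \<noteq> 0\<close> by simp
  then have "(int (k (Oq i)) - int (k (Iq i))) mod int d = (- lz i) mod int d"
    using qpow_eq_qpow_iff[OF d_pos] by blast
  then have "int (k (Oq i)) mod int d = (int (k (Iq i)) - lz i) mod int d"
    by (simp add: mod_eq_dvd_iff algebra_simps)
  moreover have "k (Oq i) < d"
    using k i by (simp add: cfgsD)
  ultimately show False
    using ne by simp
qed

primrec reset_pairs :: "nat \<Rightarrow> ('v \<Rightarrow> nat) \<Rightarrow> 'v \<Rightarrow> nat" where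
  "reset_pairs 0 k = k"
| "reset_pairs (Suc m) k =
    (reset_pairs m k)(Iq m := 0, Oq m := nat ((int (k (Oq m)) - int (k (Iq m))) mod int d))"

lemma reset_pairs_above: "m \<le> i \<Longrightarrow> i < n \<Longrightarrow>
    reset_pairs m k (Iq i) = k (Iq i) \<and> reset_pairs m k (Oq i) = k (Oq i)"
  by (induction m) auto

lemma reset_pairs_below: "i < m \<Longrightarrow> m \<le> n \<Longrightarrow> reset_pairs m k (Iq i) = 0 \<and>
    reset_pairs m k (Oq i) = nat ((int (k (Oq i)) - int (k (Iq i))) mod int d)"
  by (induction m) (auto simp: less_Suc_eq)

lemma reset_pairs_other: "a \<notin> Iq ` {..<n} \<Longrightarrow> a \<notin> Oq ` {..<n} \<Longrightarrow> m \<le> n \<Longrightarrow> reset_pairs m k a = k a"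
  by (induction m) auto

lemma reset_pairs_cfgs: "m \<le> n \<Longrightarrow> k \<in> cfgs C d \<Longrightarrow> reset_pairs m k \<in> cfgs C d"
  by (induction m) (use d_pos in \<open>auto intro!: cfgs_upd simp: nat_less_iff\<close>)

lemma Psi_reset_pairs: "m \<le> n \<Longrightarrow> k \<in> cfgs C d \<Longrightarrow>
    Psi k = (\<Prod>i<m. qpow d (- lx i * int (k (Iq i)))) * Psi (reset_pairs m k)"
proof (induction m)
  case (Suc m)
  have m: "m < n"
    using Suc by simp
  have "Psi (reset_pairs m k) = qpow d (- lx m * int (k (Iq m))) * Psi (reset_pairs (Suc m) k)"
    using joint_shift_reduce[where f = Psi and a = "Iq m" and b = "Oq m", OF d_pos _ _ _
        reset_pairs_cfgs X_pair[OF m]] m Suc.prems reset_pairs_above[of m m k]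
    by (simp del: fun_upd_apply)
  with Suc show ?case
    unfolding prod.lessThan_Suc by (simp only: ac_simps)
qed simp

definition pair_normal :: "('v \<Rightarrow> nat) \<Rightarrow> 'v \<Rightarrow> nat" where
  "pair_normal k = (\<lambda>a. if a \<in> Iq ` {..<n} then 0
     else if a \<in> Oq ` {..<n} then nat ((- lz (the_inv_into {..<n} Oq a)) mod int d) else k a)"

lemma reset_pairs_paired: "paired k \<Longrightarrow> reset_pairs n k = pair_normal k"
proof (rule ext)
  fix a assume "paired k"
  show "reset_pairs n k a = pair_normal k a"
  proof (cases "a \<in> Oq ` {..<n}")
    case True
    then obtain i where i: "i < n" "a = Oq i" by blast
    have "(int (k (Oq i)) - int (k (Iq i))) mod int d = (- lz i) mod int d"
      using \<open>paired k\<close> i unfolding paired_def by (simp add: mod_diff_left_eq)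
    then show ?thesis
      using i reset_pairs_below[OF i(1) le_refl, of k] inj_Oq by (auto simp: pair_normal_def the_inv_into_f_f)
  qed (auto simp: pair_normal_def reset_pairs_below reset_pairs_other)
qed

lemma Psi_closed_form:
  assumes "k \<in> cfgs C d"
  shows "Psi k = (if paired k then (\<Prod>i<n. qpow d (- lx i * int (k (Iq i)))) * Psi (pair_normal k) else 0)"
  using Psi_reset_pairs[OF le_refl assms] reset_pairs_paired Psi_eq_0_unless_paired[OF assms] by simp

lemma pair_normal_cfgs: "k \<in> cfgs C d \<Longrightarrow> pair_normal k \<in> cfgs C d"
  using d_pos Iq_in_C Oq_in_C
  by (intro cfgsI) (auto simp: pair_normal_def nat_less_iff cfgsD cfgs_outside)

lemma pair_normal_reg_put: "pair_normal (reg_put Oq n k l) = pair_normal k"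
  unfolding pair_normal_def by auto

lemma paired_reg_put_iff:
  assumes "l \<in> cfgs {..<n} d"
  shows "paired (reg_put Oq n k l) \<longleftrightarrow> l = cfg_shift d n (\<lambda>i. - lz i) (reg_get Iq n k)"
proof -
  have "paired (reg_put Oq n k l) \<longleftrightarrow> (\<forall>i<n. l i = cfg_shift d n (\<lambda>i. - lz i) (reg_get Iq n k) i)"
    unfolding paired_def cfg_shift_def reg_get_def using d_pos inj_Oq Iq_Oq_disjoint
    by (auto simp: image_iff)
  then show ?thesis
    using cfgs_lessThan_eqI[OF assms cfg_shift_cfgs[OF d_pos]] by auto
qed

end

section \<open>The measured cluster state\<close>

locale measured_cluster = io_registers d n C Iq Oq
  for d n :: nat and C :: "'v set" and Iq Oq :: "nat \<Rightarrow> 'v" +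
  fixes CI CM CO :: "'v set" and E :: "'v set set"
    and u :: "'v \<Rightarrow> nat \<Rightarrow> nat \<Rightarrow> complex" and s :: "'v \<Rightarrow> nat"
    and U :: "(nat \<Rightarrow> nat) \<Rightarrow> (nat \<Rightarrow> nat) \<Rightarrow> complex" and lx lz :: "nat \<Rightarrow> int"
    and Phi :: "('v \<Rightarrow> nat) \<Rightarrow> complex"
  assumes finite_C: "finite C"
    and C_decomp: "C = CI \<union> CM \<union> CO" and CI_CM: "CI \<inter> CM = {}" and CM_CO: "CM \<inter> CO = {}"
    and CI_eq: "CI = Iq ` {..<n}" and CO_eq: "CO = Oq ` {..<n}"
    and U_unitary: "nunitary d n U"
    and Phi_eq: "Phi = op_sites d C CM (\<lambda>a. proj1 (ucol (u a) (s a))) (cluster_state d C E)"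
    and Phi_nonzero: "\<exists>k. Phi k \<noteq> 0"
    and stab_X: "\<And>i. i < n \<Longrightarrow> op_at d C (Iq i) (Xm d)
        (op_on d C Oq n (nmul d n (nmul d n U (nlocal n i (Xm d))) (nadj U)) Phi)
      = (\<lambda>k. qpow d (- lx i) * Phi k)"
    and stab_Z: "\<And>i. i < n \<Longrightarrow> op_at d C (Iq i) (Zdag d)
        (op_on d C Oq n (nmul d n (nmul d n U (nlocal n i (Zm d))) (nadj U)) Phi)
      = (\<lambda>k. qpow d (- lz i) * Phi k)"
begin

definition Psi :: "('v \<Rightarrow> nat) \<Rightarrow> complex" where
  "Psi = op_on d C Oq n (nadj U) Phi"

lemma Phi_outside: "k \<notin> cfgs C d \<Longrightarrow> Phi k = 0"
  unfolding Phi_eq op_sites_def by simp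

lemma op_on_U_Psi: "op_on d C Oq n U Psi = Phi"
  unfolding Psi_def using inj_Oq Oq_in_C U_unitary Phi_outside by (rule op_on_unitary_cancel)

lemma Psi_stabilizer:
  assumes i: "i < n"
    and stab: "op_at d C (Iq i) M (op_on d C Oq n (nmul d n (nmul d n U (nlocal n i N)) (nadj U)) Phi)
      = (\<lambda>k. c * Phi k)"
  shows "op_at d C (Iq i) M (op_at d C (Oq i) N Psi) = (\<lambda>k. c * Psi k)"
proof -
  let ?\<chi> = "op_at d C (Iq i) M (op_at d C (Oq i) N Psi)"
  have "op_on d C Oq n U ?\<chi> = (\<lambda>k. c * Phi k)"
    using stab i inj_Oq Oq_in_C
    by (simp add: Psi_def op_on_nmul[symmetric] op_on_nlocal op_at_op_on_commute)
  then have "op_on d C Oq n (nadj U) (op_on d C Oq n U ?\<chi>) = (\<lambda>k. c * Psi k)"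
    unfolding Psi_def using inj_Oq Oq_in_C by (simp add: op_on_scale)
  moreover have "op_on d C Oq n (nadj U) (op_on d C Oq n U ?\<chi>) = ?\<chi>"
    using inj_Oq Oq_in_C U_unitary by (rule op_on_unitary_cancel) (simp add: op_at_eq)
  ultimately show ?thesis
    by simp
qed

sublocale pair_stabilized d n C Iq Oq Psi lx lz
proof
  fix i k assume i: "i < n" and k: "k \<in> cfgs C d"
  have k': "k(Iq i := (k (Iq i) + 1) mod d) \<in> cfgs C d"
    using k i d_pos by (simp add: cfgs_upd)
  have "op_at d C (Iq i) (Xm d) (op_at d C (Oq i) (Xm d) Psi) k
      = Psi (k(Iq i := (k (Iq i) + 1) mod d, Oq i := (k (Oq i) + 1) mod d))"
    by (simp only: op_at_Xm[OF d_pos k Iq_mem_C[OF i]] op_at_Xm[OF d_pos k' Oq_mem_C[OF i]]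
        fun_upd_other[OF Oq_neq_Iq[OF i i]])
  then show "Psi (k(Iq i := (k (Iq i) + 1) mod d, Oq i := (k (Oq i) + 1) mod d)) = qpow d (- lx i) * Psi k"
    using Psi_stabilizer[OF i stab_X[OF i]] by simp
  have "op_at d C (Iq i) (Zpow d (- 1)) (op_at d C (Oq i) (Zpow d 1) Psi) k = qpow d (- lz i) * Psi k"
    using Psi_stabilizer[OF i stab_Z[OF i]] by (simp add: Zdag_def Zm_def)
  then show "qpow d (int (k (Oq i)) - int (k (Iq i))) * Psi k = qpow d (- lz i) * Psi k"
    using i by (simp add: op_at_Zpow[OF k] qpow_add[symmetric])
qed

definition outcome_amp :: "('v \<Rightarrow> nat) \<Rightarrow> complex" where
  "outcome_amp k = (\<Prod>a\<in>CM. u a (k a) (s a))"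

definition reduced_cluster :: "('v \<Rightarrow> nat) \<Rightarrow> complex" where
  "reduced_cluster k = (\<Sum>j\<in>cfgs CM d. (\<Prod>a\<in>CM. cnj (u a (j a) (s a))) *
     cluster_state d C E (override_on k j CM))"

lemma Phi_factor: "k \<in> cfgs C d \<Longrightarrow> Phi k = outcome_amp k * reduced_cluster k"
  unfolding Phi_eq op_sites_def outcome_amp_def reduced_cluster_def proj1_def ucol_def
  by (simp add: prod.distrib sum_distrib_left mult.assoc)

lemma reduced_cluster_cong:
  assumes "\<And>a. a \<notin> CM \<Longrightarrow> k a = k' a"
  shows "reduced_cluster k = reduced_cluster k'"
proof -
  have "override_on k j CM = override_on k' j CM" for j
    using assms by (auto simp: override_on_def)
  then show ?thesis
    unfolding reduced_cluster_def by simp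
qed

definition alpha :: complex where
  "alpha = (\<Sum>l\<in>cfgs {..<n} d. nadj U (reg_get Oq n (pair_normal (\<lambda>_. 0))) l *
     reduced_cluster (reg_put Oq n (pair_normal (\<lambda>_. 0)) l))"

lemma Psi_pair_normal:
  assumes k: "k \<in> cfgs C d"
  shows "Psi (pair_normal k) = outcome_amp k * alpha"
proof -
  have CM_outside: "a \<in> CM \<Longrightarrow> a \<notin> Iq ` {..<n} \<and> a \<notin> Oq ` {..<n}" for a
    using CI_CM CM_CO CI_eq CO_eq by auto
  have get: "reg_get Oq n (pair_normal k) = reg_get Oq n (pair_normal (\<lambda>_. 0))"
    unfolding reg_get_def pair_normal_def by auto
  have Phi_put: "Phi (reg_put Oq n (pair_normal k) l) =
      outcome_amp k * reduced_cluster (reg_put Oq n (pair_normal (\<lambda>_. 0)) l)"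
    if "l \<in> cfgs {..<n} d" for l
  proof -
    have "outcome_amp (reg_put Oq n (pair_normal k) l) = outcome_amp k"
      unfolding outcome_amp_def by (rule prod.cong) (simp_all add: CM_outside pair_normal_def)
    moreover have "reduced_cluster (reg_put Oq n (pair_normal k) l) =
        reduced_cluster (reg_put Oq n (pair_normal (\<lambda>_. 0)) l)"
      using k C_decomp CI_eq CO_eq
      by (intro reduced_cluster_cong) (auto simp: reg_put_def pair_normal_def cfgs_outside)
    ultimately show ?thesis
      using Phi_factor reg_put_cfgs[OF inj_Oq pair_normal_cfgs[OF k] that Oq_in_C] by simp
  qed
  have "Psi (pair_normal k) = (\<Sum>l\<in>cfgs {..<n} d.
      nadj U (reg_get Oq n (pair_normal k)) l * Phi (reg_put Oq n (pair_normal k) l))"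
    unfolding Psi_def using pair_normal_cfgs[OF k] by (simp add: op_on_eq)
  also have "\<dots> = (\<Sum>l\<in>cfgs {..<n} d. outcome_amp k * (nadj U (reg_get Oq n (pair_normal (\<lambda>_. 0))) l *
      reduced_cluster (reg_put Oq n (pair_normal (\<lambda>_. 0)) l)))"
    by (rule sum.cong) (simp_all only: get Phi_put ac_simps)
  finally show ?thesis
    unfolding alpha_def by (simp only: sum_distrib_left)
qed

lemma Phi_closed_form:
  assumes k: "k \<in> cfgs C d"
  shows "Phi k = U (reg_get Oq n k) (cfg_shift d n (\<lambda>i. - lz i) (reg_get Iq n k)) *
    (\<Prod>i<n. qpow d (- lx i * int (k (Iq i)))) * (outcome_amp k * alpha)"
proof -
  let ?l = "cfg_shift d n (\<lambda>i. - lz i) (reg_get Iq n k)"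
  have l: "?l \<in> cfgs {..<n} d"
    by (rule cfg_shift_cfgs[OF d_pos])
  have put_cfgs: "reg_put Oq n k l \<in> cfgs C d" if "l \<in> cfgs {..<n} d" for l
    using inj_Oq k that Oq_in_C by (rule reg_put_cfgs)
  have "Phi k = op_on d C Oq n U Psi k"
    by (simp only: op_on_U_Psi)
  also have "\<dots> = (\<Sum>l\<in>cfgs {..<n} d. U (reg_get Oq n k) l * Psi (reg_put Oq n k l))"
    using k by (simp add: op_on_eq)
  also have "\<dots> = U (reg_get Oq n k) ?l * Psi (reg_put Oq n k ?l)"
    using k by (intro sum_eq_single_nonzero[OF _ l])
      (auto simp: Psi_eq_0_unless_paired put_cfgs paired_reg_put_iff)
  also have "Psi (reg_put Oq n k ?l) = (\<Prod>i<n. qpow d (- lx i * int (k (Iq i)))) * Psi (pair_normal k)"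
    using Psi_closed_form[OF put_cfgs[OF l]] paired_reg_put_iff[OF l] by (simp add: pair_normal_reg_put)
  finally show ?thesis
    by (simp add: Psi_pair_normal[OF k] ac_simps)
qed

lemma alpha_neq_0: "alpha \<noteq> 0"
proof -
  obtain k where "Phi k \<noteq> 0"
    using Phi_nonzero by blast
  moreover from this have "k \<in> cfgs C d"
    using Phi_outside by blast
  ultimately show ?thesis
    using Phi_closed_form by force
qed

lemma cluster_gen_input_eq:
  "cluster_gen d C E (tens d CI (emb d Iq n \<psi>) (CM \<union> CO) (plus_state d (CM \<union> CO))) =
    (\<lambda>k. complex_of_real (sqrt (real d)) ^ n * \<psi> (reg_get Iq n k) * cluster_state d C E k)"
proof (rule ext)
  fix k
  let ?w = "1 / complex_of_real (sqrt (real d))"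
  have C_split: "C = CI \<union> (CM \<union> CO)" and CI_disj: "CI \<inter> (CM \<union> CO) = {}"
    using C_decomp CI_CM Iq_Oq_disjoint CI_eq CO_eq by auto
  have "card C = n + card (CM \<union> CO)"
    using finite_C inj_Iq CI_eq C_split CI_disj
    by (metis card_Un_disjoint card_image card_lessThan finite_Un)
  then have w: "?w ^ card (CM \<union> CO) = complex_of_real (sqrt (real d)) ^ n * ?w ^ card C"
    using d_pos by (simp add: power_add field_simps)
  show "cluster_gen d C E (tens d CI (emb d Iq n \<psi>) (CM \<union> CO) (plus_state d (CM \<union> CO))) k =
    complex_of_real (sqrt (real d)) ^ n * \<psi> (reg_get Iq n k) * cluster_state d C E k"
  proof (cases "k \<in> cfgs C d")
    case True
    have "restr (CM \<union> CO) k \<in> cfgs (CM \<union> CO) d"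
      using True C_split by (intro restr_cfgs) auto
    then show ?thesis
      using True C_split CI_eq Iq_in_C w
      by (simp add: cluster_gen_def cluster_state_def tens_def emb_restr plus_state_eq ac_simps)
  qed (simp add: cluster_gen_def cluster_state_def)
qed

lemma measured_input_eq:
  "op_sites d C CM (\<lambda>a. proj1 (ucol (u a) (s a)))
      (cluster_gen d C E (tens d CI (emb d Iq n \<psi>) (CM \<union> CO) (plus_state d (CM \<union> CO)))) =
    (\<lambda>k. complex_of_real (sqrt (real d)) ^ n * \<psi> (reg_get Iq n k) * Phi k)"
proof -
  have Iq_notin_CM: "Iq i \<notin> CM" if "i < n" for i
    using that CI_CM CI_eq by auto
  have "reg_get Iq n (override_on k j CM) = reg_get Iq n k" for k j
    unfolding reg_get_def override_on_def by (rule ext) (simp add: Iq_notin_CM)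
  then show ?thesis
    unfolding cluster_gen_input_eq Phi_eq by (intro op_sites_mult_invariant) simp
qed

lemma target_state_eq:
  assumes k: "k \<in> cfgs C d"
  shows "tens d CI (prod_state d CI f) (CM \<union> CO)
      (tens d CM (prod_state d CM (\<lambda>a. ucol (u a) (s a))) CO (emb d Oq n V)) k
    = (\<Prod>a\<in>CI. f a (k a)) * outcome_amp k * V (reg_get Oq n k)"
proof -
  have MO: "CM \<union> CO \<subseteq> C" and CM: "CM \<subseteq> CM \<union> CO" and CO: "CO \<subseteq> CM \<union> CO"
    using C_decomp by auto
  have "prod_state d CI f (restr CI k) = (\<Prod>a\<in>CI. f a (k a))"
    using k C_decomp by (intro prod_state_restr) auto
  moreover have "prod_state d CM (\<lambda>a. ucol (u a) (s a)) (restr CM (restr (CM \<union> CO) k)) = outcome_amp k"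
    unfolding restr_restr[OF CM] outcome_amp_def ucol_def using k MO by (intro prod_state_restr) auto
  moreover have "emb d Oq n V (restr CO (restr (CM \<union> CO) k)) = V (reg_get Oq n k)"
    using emb_restr[OF k Oq_in_C] restr_restr[OF CO] CO_eq by simp
  moreover have "k \<in> cfgs (CI \<union> (CM \<union> CO)) d" "restr (CM \<union> CO) k \<in> cfgs (CM \<union> CO) d"
    using k MO C_decomp by (auto simp: Un_assoc restr_cfgs)
  ultimately show ?thesis
    by (simp add: tens_def)
qed

lemma Phi_reg_put_Iq:
  assumes k: "k \<in> cfgs C d" and m: "m \<in> cfgs {..<n} d"
  shows "Phi (reg_put Iq n k m) = U (reg_get Oq n k) (cfg_shift d n (\<lambda>i. - lz i) m) *
    (\<Prod>i<n. qpow d (- lx i * int (m i))) * (outcome_amp k * alpha)"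
proof -
  have "reg_get Oq n (reg_put Iq n k m) = reg_get Oq n k"
    unfolding reg_get_def by (rule ext) simp
  moreover have "outcome_amp (reg_put Iq n k m) = outcome_amp k"
    unfolding outcome_amp_def using CI_CM CI_eq by (intro prod.cong) (auto simp: reg_put_def)
  ultimately show ?thesis
    using Phi_closed_form[OF reg_put_cfgs[OF inj_Iq k m Iq_in_C]]
    by (simp add: reg_get_put[OF inj_Iq m] inj_Iq)
qed

definition teleport_const :: "(nat \<Rightarrow> nat) \<Rightarrow> complex" where
  "teleport_const sI = alpha * (\<Prod>i<n. qpow d (- (lx i + int (sI i)) * lz i))"

lemma teleport_const_neq_0: "teleport_const sI \<noteq> 0"
  unfolding teleport_const_def using alpha_neq_0 by simp

lemma projected_amplitude:
  assumes k: "k \<in> cfgs C d" and m: "m \<in> cfgs {..<n} d"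
  defines "m' \<equiv> cfg_shift d n (\<lambda>i. - lz i) m"
  shows "(\<Prod>i<n. proj1 (xvec d (sI i)) (k (Iq i)) (m i)) *
      (complex_of_real (sqrt (real d)) ^ n * \<psi> m * Phi (reg_put Iq n k m)) =
    teleport_const sI * (\<Prod>i<n. xvec d (sI i) (k (Iq i))) * outcome_amp k *
      (U (reg_get Oq n k) m' * (\<Prod>i<n. qpow d ((- lx i - int (sI i)) * int (m' i))) * \<psi> m)"
proof -
  let ?r = "complex_of_real (sqrt (real d))"
  have "(\<Prod>i<n. cnj (xvec d (sI i) (m i))) * (\<Prod>i<n. qpow d (- lx i * int (m i))) =
      (\<Prod>i<n. qpow d (- (lx i + int (sI i)) * lz i) / ?r * qpow d ((- lx i - int (sI i)) * int (m' i)))"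
    unfolding prod.distrib[symmetric]
  proof (rule prod.cong)
    fix i assume "i \<in> {..<n}"
    then have "m' i = nat ((int (m i) - lz i) mod int d)"
      by (simp add: m'_def cfg_shift_def)
    then show "cnj (xvec d (sI i) (m i)) * qpow d (- lx i * int (m i)) =
        qpow d (- (lx i + int (sI i)) * lz i) / ?r * qpow d ((- lx i - int (sI i)) * int (m' i))"
      by (simp only: cnj_xvec_mult_qpow[OF d_pos])
  qed simp
  also have "\<dots> = (\<Prod>i<n. qpow d (- (lx i + int (sI i)) * lz i)) / ?r ^ n *
      (\<Prod>i<n. qpow d ((- lx i - int (sI i)) * int (m' i)))"
    by (simp add: prod.distrib prod_dividef)
  finally have phases: "?r ^ n * ((\<Prod>i<n. cnj (xvec d (sI i) (m i))) * (\<Prod>i<n. qpow d (- lx i * int (m i)))) =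
      (\<Prod>i<n. qpow d (- (lx i + int (sI i)) * lz i)) * (\<Prod>i<n. qpow d ((- lx i - int (sI i)) * int (m' i)))"
    using d_pos by simp
  have "(\<Prod>i<n. proj1 (xvec d (sI i)) (k (Iq i)) (m i)) =
      (\<Prod>i<n. xvec d (sI i) (k (Iq i))) * (\<Prod>i<n. cnj (xvec d (sI i) (m i)))"
    unfolding proj1_def by (rule prod.distrib)
  then have "(\<Prod>i<n. proj1 (xvec d (sI i)) (k (Iq i)) (m i)) * (?r ^ n * \<psi> m * Phi (reg_put Iq n k m)) =
      alpha * (\<Prod>i<n. xvec d (sI i) (k (Iq i))) * outcome_amp k * U (reg_get Oq n k) m' * \<psi> m *
      (?r ^ n * ((\<Prod>i<n. cnj (xvec d (sI i) (m i))) * (\<Prod>i<n. qpow d (- lx i * int (m i)))))"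
    unfolding Phi_reg_put_Iq[OF k m] m'_def[symmetric] by (simp only: ac_simps)
  also have "\<dots> = teleport_const sI * (\<Prod>i<n. xvec d (sI i) (k (Iq i))) * outcome_amp k *
      (U (reg_get Oq n k) m' * (\<Prod>i<n. qpow d ((- lx i - int (sI i)) * int (m' i))) * \<psi> m)"
    unfolding phases teleport_const_def by (simp only: ac_simps)
  finally show ?thesis .
qed

lemma measured_teleportation:
  "op_sites d C CI (\<lambda>a. proj1 (xvec d (sI (the_inv_into {..<n} Iq a))))
      (op_sites d C CM (\<lambda>a. proj1 (ucol (u a) (s a)))
        (cluster_gen d C E (tens d CI (emb d Iq n \<psi>) (CM \<union> CO) (plus_state d (CM \<union> CO))))) k
   = teleport_const sI * tens d CI (prod_state d CI (\<lambda>a. xvec d (sI (the_inv_into {..<n} Iq a))))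
       (CM \<union> CO) (tens d CM (prod_state d CM (\<lambda>a. ucol (u a) (s a))) CO
         (emb d Oq n (nmv d n U (nmv d n (ntens n (\<lambda>i. mmul1 d (Zpow d (- lx i - int (sI i))) (Xpow d (lz i))))
           \<psi>)))) k"
  (is "?L = teleport_const sI * ?R")
proof (cases "k \<in> cfgs C d")
  case True
  let ?m' = "cfg_shift d n (\<lambda>i. - lz i)"
  let ?F = "\<lambda>m. U (reg_get Oq n k) (?m' m) * (\<Prod>i<n. qpow d ((- lx i - int (sI i)) * int (?m' m i))) * \<psi> m"
  have "?L = (\<Sum>m\<in>cfgs {..<n} d. teleport_const sI * (\<Prod>i<n. xvec d (sI i) (k (Iq i))) * outcome_amp k * ?F m)"
    unfolding measured_input_eq unfolding CI_eq op_sites_register[OF inj_Iq True]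
    using True by (intro sum.cong) (simp_all add: inj_Iq reg_get_put projected_amplitude)
  also have "\<dots> = teleport_const sI * ((\<Prod>i<n. xvec d (sI i) (k (Iq i))) * outcome_amp k * sum ?F (cfgs {..<n} d))"
    by (simp add: sum_distrib_left ac_simps)
  also have "\<dots> = teleport_const sI * ?R"
    unfolding target_state_eq[OF True] unfolding CI_eq
    using inj_Iq reg_get_cfgs[OF True Oq_in_C]
    by (simp add: prod.reindex nmv_nmv_ntens_Zpow_Xpow[OF d_pos])
  finally show ?thesis .
next
  case False
  then show ?thesis
    using C_decomp by (simp add: op_sites_def tens_def Un_assoc)
qed

end

theorem theorem2:
  fixes d n :: nat
    and C CI CM CO :: "'v set"
    and E :: "'v set set"
    and Iq Oq :: "nat \<Rightarrow> 'v"
    and u :: "'v \<Rightarrow> nat \<Rightarrow> nat \<Rightarrow> complex"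
    and s :: "'v \<Rightarrow> nat"
    and U :: "(nat \<Rightarrow> nat) \<Rightarrow> (nat \<Rightarrow> nat) \<Rightarrow> complex"
    and lx lz :: "nat \<Rightarrow> int"
  assumes d: "d \<ge> 2"
    and G: "simple_graph_on C E"
    and decomp: "C = CI \<union> CM \<union> CO" "CI \<inter> CM = {}" "CI \<inter> CO = {}" "CM \<inter> CO = {}"
    and inI: "inj_on Iq {..<n}" "CI = Iq ` {..<n}"
    and inO: "inj_on Oq {..<n}" "CO = Oq ` {..<n}"
    and u_unit: "\<forall>a\<in>CM. unitary1 d (u a)"
    and s_rng: "\<forall>a\<in>CM. s a < d"
    and U_unit: "nunitary d n U"
    and lam_rng: "\<forall>i<n. 0 \<le> lx i \<and> lx i < int d \<and> 0 \<le> lz i \<and> lz i < int d"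
  defines "P \<equiv> op_sites d C CM (\<lambda>a. proj1 (ucol (u a) (s a)))"
    and "S \<equiv> cluster_gen d C E"
  assumes nonzero: "\<exists>k. P (cluster_state d C E) k \<noteq> 0"
    and stabX: "\<forall>i<n. op_at d C (Iq i) (Xm d)
                  (op_on d C Oq n (nmul d n (nmul d n U (nlocal n i (Xm d))) (nadj U))
                    (P (cluster_state d C E)))
                = (\<lambda>k. qpow d (- lx i) * P (cluster_state d C E) k)"
    and stabZ: "\<forall>i<n. op_at d C (Iq i) (Zdag d)
                  (op_on d C Oq n (nmul d n (nmul d n U (nlocal n i (Zm d))) (nadj U))
                    (P (cluster_state d C E)))
                = (\<lambda>k. qpow d (- lz i) * P (cluster_state d C E) k)"
  shows "\<forall>sI :: nat \<Rightarrow> nat. (\<forall>i<n. sI i < d) \<longrightarrow>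
          (\<exists>c :: complex. c \<noteq> 0 \<and>
            (\<forall>\<psi>in :: (nat \<Rightarrow> nat) \<Rightarrow> complex.
               op_sites d C CI (\<lambda>a. proj1 (xvec d (sI (the_inv_into {..<n} Iq a))))
                 (P (S (tens d CI (emb d Iq n \<psi>in) (CM \<union> CO) (plus_state d (CM \<union> CO)))))
             = (\<lambda>k. c * tens d CI (prod_state d CI (\<lambda>a. xvec d (sI (the_inv_into {..<n} Iq a))))
                         (CM \<union> CO)
                         (tens d CM (prod_state d CM (\<lambda>a. ucol (u a) (s a)))
                                 CO (emb d Oq n
                                       (nmv d n U (nmv d n (ntens n (\<lambda>i. mmul1 d (Zpow d (- lx i - int (sI i))) (Xpow d (lz i))))
                                          \<psi>in)))) k)))"
proof -
  note P_def = assms(15) and S_def = assms(16)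
  have "finite C"
    using G unfolding simple_graph_on_def by simp
  interpret measured_cluster d n C Iq Oq CI CM CO E u s U lx lz "P (cluster_state d C E)"
    by unfold_locales (use d \<open>finite C\<close> decomp inI inO U_unit nonzero stabX stabZ in \<open>auto simp: P_def\<close>)
  show ?thesis
    unfolding P_def S_def using teleport_const_neq_0 measured_teleportation by (blast intro: ext)
qed

end
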